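(* Let $K$ be an $n$-dimensional oriented, well-centered, manifold-like simplicial complex with boundary $\partial K$ and circumcentric dual complex, and let $p,q$ be positive integers with $p+q=n+1$. Let $\mathcal F^d_{p,q}=\Omega_d^p(\star_{\mathrm i}K)\times\Omega_d^q(K)\times\Omega_d^{n-p}(\partial K)$ and $\mathcal E^d_{p,q}=\Omega_d^{n-p}(K)\times\Omega_d^{n-q}(\star_{\mathrm i}K)\times\Omega_d^{n-q}(\partial(\star K))$, with the symmetric bilinear form on $\mathcal F^d_{p,q}\times\mathcal E^d_{p,q}$ $$\langle\!\langle(\hat f_p^1,f_q^1,f_b^1,e_p^1,\hat e_q^1,\hat e_b^1),(\hat f_p^2,f_q^2,f_b^2,e_p^2,\hat e_q^2,\hat e_b^2)\rangle\!\rangle_d=\langle e_p^1\wedge\hat f_p^2+\hat e_q^1\wedge f_q^2+e_p^2\wedge\hat f_p^1+\hat e_q^2\wedge f_q^1,K\rangle+\langle\hat e_b^1\wedge f_b^2+\hat e_b^2\wedge f_b^1,\partial K\rangle .$$ Define $\mathcal D_d\subset\mathcal F^d_{p,q}\times\mathcal E^d_{p,q}$ as the set of $(\hat f_p,f_q,f_b,e_p,\hat e_q,\hat e_b)$ such that $$\hat f_p=(-1)^{pq+1}\big(\mathbf d_{\mathrm i}\hat e_q+\mathbf d_{\mathrm b}\hat e_b\big),\qquad f_q=\mathbf d e_p,\qquad f_b=(-1)^p\,e_p|_{\partial K}.$$ Then $\mathcal D_d=\mathcal D_d^{\perp}$ (orthogonal complement with respect to $\langle\!\langle\cdot,\cdot\rangle\!\rangle_d$),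 i.e. $\mathcal D_d$ is a Dirac structure.
   Context: Setting. $K$ is an $n$-dimensional manifold-like simplicial complex (every simplex is a face of some $n$-simplex), oriented ($n$-simplices sharing an $(n-1)$-face are coherently oriented, lower-dimensional simplices are individually oriented) and well-centered (every simplex contains its circumcenter in its interior). $\partial K$ is the $(n-1)$-dimensional boundary subcomplex: the $(n-1)$-simplices that are faces of exactly one $n$-simplex, together with all their faces. For simplices $\sigma^{j-1}\prec\sigma^{j}$ let $[\sigma^{j-1}:\sigma^{j}]\in\{\pm1\}$ be the coefficient of $\sigma^{j-1}$ in the simplicial boundary $\partial[v_0,\dots,v_j]=\sum_i(-1)^i[v_0,\dots,\widehat{v_i},\dots,v_j]$. Dual cells. Each simplex $\sigma^j\in K$ has a circumcentric interior dual $(n-j)$-cell $\star_{\mathrm i}\sigma^j$; each $\tau^j\in\partial K$ has a boundary dual $(n-1-j)$-cell $\star_{\mathrm b}\tau^j$ (its circumcentric dual within $\partial K$). Discrete forms. $\Omega_d^j(K)$ (resp. $\Omega_d^j(\partial K)$): real functions on the $j$-simplices of $K$ (resp. $\partial K$); $\Omega_d^m(\star_{\mathrm i}K)$: real functions on interior dual $m$-cells $\star_{\mathrm i}\sigma^{n-m}$; $\Omega_d^m(\partial(\star K))$: real functions on boundary dual $m$-cells $\star_{\mathrm b}\tau^{n-1-m}$, $\tau\in\partial K$. For primal $\alpha$, $\alpha|_{\partial K}$ is its restriction to simplices of $\partial K$. Derivatives. Primal: $(\mathbf d\alpha)(\sigma^{j})=\sum_{\sigma^{j-1}\prec\sigma^{j}}[\sigma^{j-1}:\sigma^{j}]\alpha(\sigma^{j-1})$.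 Dual: for $\hat\beta_{\mathrm i}\in\Omega_d^{m}(\star_{\mathrm i}K)$, $\hat\beta_{\mathrm b}\in\Omega_d^{m}(\partial(\star K))$, $m\le n-1$, with $j=n-m$: $(\mathbf d_{\mathrm i}\hat\beta_{\mathrm i})(\star_{\mathrm i}\sigma^{j-1})=(-1)^{j}\sum_{\sigma^{j}\succ\sigma^{j-1}}[\sigma^{j-1}:\sigma^{j}]\hat\beta_{\mathrm i}(\star_{\mathrm i}\sigma^{j})$, and $(\mathbf d_{\mathrm b}\hat\beta_{\mathrm b})(\star_{\mathrm i}\sigma^{j-1})=(-1)^{j-1}\hat\beta_{\mathrm b}(\star_{\mathrm b}\sigma^{j-1})$ if $\sigma^{j-1}\in\partial K$, $0$ otherwise; both lie in $\Omega_d^{m+1}(\star_{\mathrm i}K)$. Wedge pairings (extended bilinearly, so $\langle a+b,K\rangle=\langle a,K\rangle+\langle b,K\rangle$). For $\alpha\in\Omega_d^j(K)$, $\hat\beta\in\Omega_d^{n-j}(\star_{\mathrm i}K)$: $\langle\alpha\wedge\hat\beta,K\rangle=\sum_{\sigma^j\in K}\alpha(\sigma^j)\hat\beta(\star_{\mathrm i}\sigma^j)$, $\langle\hat\beta\wedge\alpha,K\rangle=(-1)^{j(n-j)}\langle\alpha\wedge\hat\beta,K\rangle$. For $\alpha\in\Omega_d^j(\partial K)$, $\hat\gamma\in\Omega_d^{n-1-j}(\partial(\star K))$: $\langle\alpha\wedge\hat\gamma,\partial K\rangle=\sum_{\tau^j\in\partial K}\alpha(\tau^j)\hat\gamma(\star_{\mathrm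 b}\tau^j)$, $\langle\hat\gamma\wedge\alpha,\partial K\rangle=(-1)^{j(n-1-j)}\langle\alpha\wedge\hat\gamma,\partial K\rangle$. A Dirac structure is a linear subspace $\mathcal D\subset\mathcal F\times\mathcal E$ with $\mathcal D=\mathcal D^\perp$ for the given symmetric bilinear form. *)

theory Defs
  imports "HOL-Analysis.Analysis"
begin

text \<open>
Oriented simplices are represented as lists of distinct vertices; the list order fixes
the orientation (the chosen representative up to even permutations).  A complex is a
finite set of such lists, containing exactly one oriented representative for each
underlying vertex set.  A j-simplex is a list of length j+1.  Discrete forms (primal,
interior dual, boundary primal, boundary dual) are real functions on simplices that
vanish outside their domain; an interior dual cell of a simplex and a boundary dual cell
of a boundary simplex are indexed by that simplex.
\<close>

type_synonym 'v form = "'v list \<Rightarrow> real"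

definition simp :: "'v list set \<Rightarrow> nat \<Rightarrow> 'v list set" where
  "simp K j = {s \<in> K. length s = j + 1}"

definition face :: "'v list \<Rightarrow> 'v list \<Rightarrow> bool" where
  "face t s \<longleftrightarrow> set t \<subseteq> set s \<and> length t + 1 = length s"

definition list_pos :: "'v list \<Rightarrow> 'v \<Rightarrow> nat" where
  "list_pos ys x = length (takeWhile (\<lambda>y. y \<noteq> x) ys)"

definition rel_sign :: "'v list \<Rightarrow> 'v list \<Rightarrow> real" where
  "rel_sign xs ys = (-1) ^ card {(i, j). i < j \<and> j < length xs \<and>
      list_pos ys (xs ! j) < list_pos ys (xs ! i)}"

text \<open>Incidence number [t : s]: the coefficient of the oriented simplex t in the
  simplicial boundary of s = [v0,...,vj], i.e. (-1)^i times the relative orientation of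
  [v0,..,vi omitted,..,vj] and t, where vi is the vertex of s not in t.\<close>
definition incidence :: "'v list \<Rightarrow> 'v list \<Rightarrow> real" where
  "incidence t s = (-1) ^ length (takeWhile (\<lambda>v. v \<in> set t) s)
      * rel_sign (filter (\<lambda>v. v \<in> set t) s) t"

definition list_simplicial_complex :: "'v list set \<Rightarrow> bool" where
  "list_simplicial_complex K \<longleftrightarrow> finite K \<and>
     (\<forall>s\<in>K. distinct s \<and> s \<noteq> []) \<and>
     (\<forall>s\<in>K. \<forall>t\<in>K. set s = set t \<longrightarrow> s = t) \<and>
     (\<forall>s\<in>K. \<forall>A. A \<subseteq> set s \<and> A \<noteq> {} \<longrightarrow> (\<exists>t\<in>K. set t = A))"

definition manifold_like :: "'v list set \<Rightarrow> nat \<Rightarrow> bool" where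
  "manifold_like K n \<longleftrightarrow> simp K n \<noteq> {} \<and>
     (\<forall>s\<in>K. \<exists>t\<in>simp K n. set s \<subseteq> set t)"

definition bdry :: "'v list set \<Rightarrow> nat \<Rightarrow> 'v list set" where
  "bdry K n = {t \<in> K. \<exists>u \<in> simp K (n - 1).
       card {s \<in> simp K n. face u s} = 1 \<and> set t \<subseteq> set u}"

definition oriented :: "'v list set \<Rightarrow> nat \<Rightarrow> bool" where
  "oriented K n \<longleftrightarrow> (\<forall>u\<in>simp K (n - 1). \<forall>s1\<in>simp K n. \<forall>s2\<in>simp K n.
       s1 \<noteq> s2 \<and> face u s1 \<and> face u s2 \<longrightarrow> incidence u s1 = - incidence u s2)"

definition geometric_realization :: "'v list set \<Rightarrow> ('v \<Rightarrow> 'a::euclidean_space) \<Rightarrow> bool" where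
  "geometric_realization K pos \<longleftrightarrow> inj_on pos (\<Union>s\<in>K. set s) \<and>
     (\<forall>s\<in>K. \<not> affine_dependent (pos ` set s)) \<and>
     (\<forall>s\<in>K. \<forall>t\<in>K. convex hull (pos ` set s) \<inter> convex hull (pos ` set t)
                    = convex hull (pos ` (set s \<inter> set t)))"

definition well_centered :: "'v list set \<Rightarrow> ('v \<Rightarrow> 'a::euclidean_space) \<Rightarrow> bool" where
  "well_centered K pos \<longleftrightarrow> (\<forall>s\<in>K. \<exists>c \<in> rel_interior (convex hull (pos ` set s)).
       \<forall>v\<in>set s. \<forall>w\<in>set s. dist c (pos v) = dist c (pos w))"

definition prim_forms :: "'v list set \<Rightarrow> nat \<Rightarrow> 'v form set" where
  "prim_forms K j = {\<alpha>. \<forall>s. s \<notin> simp K j \<longrightarrow> \<alpha> s = 0}"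

definition bprim_forms :: "'v list set \<Rightarrow> nat \<Rightarrow> nat \<Rightarrow> 'v form set" where
  "bprim_forms K n j = {\<alpha>. \<forall>s. s \<notin> simp K j \<inter> bdry K n \<longrightarrow> \<alpha> s = 0}"

text \<open>Interior dual m-forms: functions on the dual cells of (n-m)-simplices.\<close>
definition dual_forms :: "'v list set \<Rightarrow> nat \<Rightarrow> nat \<Rightarrow> 'v form set" where
  "dual_forms K n m = {\<beta>. \<forall>s. s \<notin> simp K (n - m) \<longrightarrow> \<beta> s = 0}"

text \<open>Boundary dual m-forms: functions on boundary dual cells of (n-1-m)-simplices of the boundary.\<close>
definition bdual_forms :: "'v list set \<Rightarrow> nat \<Rightarrow> nat \<Rightarrow> 'v form set" where
  "bdual_forms K n m = {\<beta>. \<forall>s. s \<notin> simp K (n - 1 - m) \<inter> bdry K n \<longrightarrow> \<beta> s = 0}"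

text \<open>Primal exterior derivative of a (j-1)-form, giving a j-form.\<close>
definition dprim :: "'v list set \<Rightarrow> nat \<Rightarrow> 'v form \<Rightarrow> 'v form" where
  "dprim K j \<alpha> = (\<lambda>s. if s \<in> simp K j
       then (\<Sum>t\<in>{t \<in> K. face t s}. incidence t s * \<alpha> t) else 0)"

text \<open>Interior dual derivative of an interior dual m-form (j = n - m).\<close>
definition dint :: "'v list set \<Rightarrow> nat \<Rightarrow> nat \<Rightarrow> 'v form \<Rightarrow> 'v form" where
  "dint K n m \<beta> = (\<lambda>s. if s \<in> simp K (n - m - 1)
       then (-1) ^ (n - m) * (\<Sum>u\<in>{u \<in> K. face s u}. incidence s u * \<beta> u) else 0)"

text \<open>Boundary-to-interior dual derivative of a boundary dual m-form (j = n - m).\<close>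
definition dbd :: "'v list set \<Rightarrow> nat \<Rightarrow> nat \<Rightarrow> 'v form \<Rightarrow> 'v form" where
  "dbd K n m \<beta> = (\<lambda>s. if s \<in> simp K (n - m - 1) \<and> s \<in> bdry K n
       then (-1) ^ (n - m - 1) * \<beta> s else 0)"

definition restr :: "'v list set \<Rightarrow> nat \<Rightarrow> 'v form \<Rightarrow> 'v form" where
  "restr K n \<alpha> = (\<lambda>s. if s \<in> bdry K n then \<alpha> s else 0)"

text \<open>\<langle>\<alpha> \<and> \<beta>, K\<rangle> for a primal j-form \<alpha> and an interior dual (n-j)-form \<beta>.\<close>
definition wedge_pd :: "'v list set \<Rightarrow> nat \<Rightarrow> 'v form \<Rightarrow> 'v form \<Rightarrow> real" where
  "wedge_pd K j \<alpha> \<beta> = (\<Sum>s\<in>simp K j. \<alpha> s * \<beta> s)"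

text \<open>\<langle>\<beta> \<and> \<alpha>, K\<rangle> for an interior dual (n-j)-form \<beta> and a primal j-form \<alpha>.\<close>
definition wedge_dp :: "'v list set \<Rightarrow> nat \<Rightarrow> nat \<Rightarrow> 'v form \<Rightarrow> 'v form \<Rightarrow> real" where
  "wedge_dp K n j \<beta> \<alpha> = (-1) ^ (j * (n - j)) * wedge_pd K j \<alpha> \<beta>"

text \<open>\<langle>\<alpha> \<and> \<gamma>, \<partial>K\<rangle> for a boundary primal j-form \<alpha> and a boundary dual (n-1-j)-form \<gamma>.\<close>
definition wedge_bpd :: "'v list set \<Rightarrow> nat \<Rightarrow> nat \<Rightarrow> 'v form \<Rightarrow> 'v form \<Rightarrow> real" where
  "wedge_bpd K n j \<alpha> \<gamma> = (\<Sum>s\<in>simp K j \<inter> bdry K n. \<alpha> s * \<gamma> s)"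

definition wedge_bdp :: "'v list set \<Rightarrow> nat \<Rightarrow> nat \<Rightarrow> 'v form \<Rightarrow> 'v form \<Rightarrow> real" where
  "wedge_bdp K n j \<gamma> \<alpha> = (-1) ^ (j * (n - 1 - j)) * wedge_bpd K n j \<alpha> \<gamma>"

type_synonym 'v flows = "'v form \<times> 'v form \<times> 'v form"
type_synonym 'v efforts = "'v form \<times> 'v form \<times> 'v form"

definition flow_space :: "'v list set \<Rightarrow> nat \<Rightarrow> nat \<Rightarrow> nat \<Rightarrow> 'v flows set" where
  "flow_space K n p q = dual_forms K n p \<times> prim_forms K q \<times> bprim_forms K n (n - p)"

definition effort_space :: "'v list set \<Rightarrow> nat \<Rightarrow> nat \<Rightarrow> nat \<Rightarrow> 'v efforts set" where
  "effort_space K n p q = prim_forms K (n - p) \<times> dual_forms K n (n - q) \<times> bdual_forms K n (n - q)"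

definition bond_pairing :: "'v list set \<Rightarrow> nat \<Rightarrow> nat \<Rightarrow> nat \<Rightarrow>
    'v flows \<times> 'v efforts \<Rightarrow> 'v flows \<times> 'v efforts \<Rightarrow> real" where
  "bond_pairing K n p q x y =
     (case x of ((fp1, fq1, fb1), (ep1, eq1, eb1)) \<Rightarrow>
      case y of ((fp2, fq2, fb2), (ep2, eq2, eb2)) \<Rightarrow>
        (wedge_pd K (n - p) ep1 fp2 + wedge_dp K n q eq1 fq2
         + wedge_pd K (n - p) ep2 fp1 + wedge_dp K n q eq2 fq1)
        + (wedge_bdp K n (n - p) eb1 fb2 + wedge_bdp K n (n - p) eb2 fb1))"

definition dirac_D :: "'v list set \<Rightarrow> nat \<Rightarrow> nat \<Rightarrow> nat \<Rightarrow> ('v flows \<times> 'v efforts) set" where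
  "dirac_D K n p q = {((fp, fq, fb), (ep, eq, eb)) \<in> flow_space K n p q \<times> effort_space K n p q.
      fp = (\<lambda>s. (-1) ^ (p * q + 1) * (dint K n (n - q) eq s + dbd K n (n - q) eb s)) \<and>
      fq = dprim K q ep \<and>
      fb = (\<lambda>s. (-1) ^ p * restr K n ep s)}"

definition orth_compl :: "'v list set \<Rightarrow> nat \<Rightarrow> nat \<Rightarrow> nat \<Rightarrow>
    ('v flows \<times> 'v efforts) set \<Rightarrow> ('v flows \<times> 'v efforts) set" where
  "orth_compl K n p q D = {x \<in> flow_space K n p q \<times> effort_space K n p q.
      \<forall>y\<in>D. bond_pairing K n p q x y = 0}"

end

theory Submission
  imports Defs "HOL-Library.Function_Algebras"
begin

text \<open>
The map sending an effort \<open>(e\<^sub>p, e\<^sub>q, e\<^sub>b)\<close> to the flow prescribed by \<open>D\<close>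
(signed \<open>d\<^sub>i e\<^sub>q + d\<^sub>b e\<^sub>b\<close>, then \<open>d e\<^sub>p\<close>, then the signed restriction of
\<open>e\<^sub>p\<close> to \<open>\<partial>K\<close>) is skew-adjoint for the effort--flow pairing: \<open>d\<close> is, up to
sign, the transpose of \<open>d\<^sub>i\<close>, and the boundary derivative \<open>d\<^sub>b\<close> exactly cancels the
restriction term (discrete Stokes).  Skew-adjointness gives \<open>D \<subseteq> D\<^sup>\<perp>\<close>.  Since
\<open>p + q = n + 1\<close>, flows and efforts live on the same simplices and the pairing is a
nondegenerate sum of signed squares; pairing \<open>(f, e) \<in> D\<^sup>\<perp>\<close> against all of \<open>D\<close>
shows that \<open>f\<close> minus the flow of \<open>e\<close> pairs to zero with every effort, hence vanishes.
\<close>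

definition dirac_flow :: "'v list set \<Rightarrow> nat \<Rightarrow> nat \<Rightarrow> nat \<Rightarrow> 'v efforts \<Rightarrow> 'v flows" where
  "dirac_flow K n p q =
     (\<lambda>(ep, eq, eb). ((\<lambda>s. (-1) ^ (p * q + 1) * (dint K n (n - q) eq s + dbd K n (n - q) eb s)),
                      dprim K q ep, (\<lambda>s. (-1) ^ p * restr K n ep s)))"

definition effort_flow_pairing :: "'v list set \<Rightarrow> nat \<Rightarrow> nat \<Rightarrow> nat \<Rightarrow> 'v efforts \<Rightarrow> 'v flows \<Rightarrow> real" where
  "effort_flow_pairing K n p q =
     (\<lambda>(ep, eq, eb) (fp, fq, fb).
        wedge_pd K (n - p) ep fp + wedge_dp K n q eq fq + wedge_bdp K n (n - p) eb fb)"

lemma bond_pairing_eq_effort_flow_pairing: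
  "bond_pairing K n p q (f1, e1) (f2, e2)
     = effort_flow_pairing K n p q e1 f2 + effort_flow_pairing K n p q e2 f1"
  by (cases f1, cases f2, cases e1, cases e2) (simp add: bond_pairing_def effort_flow_pairing_def)

lemma effort_flow_pairing_diff:
  "effort_flow_pairing K n p q e (f - g) = effort_flow_pairing K n p q e f - effort_flow_pairing K n p q e g"
  by (cases e, cases f, cases g)
     (simp add: effort_flow_pairing_def wedge_dp_def wedge_pd_def wedge_bdp_def wedge_bpd_def
        algebra_simps sum_subtractf)

lemma wedge_pd_scale_add:
  "wedge_pd K j \<alpha> (\<lambda>s. c * (f s + g s)) = c * (wedge_pd K j \<alpha> f + wedge_pd K j \<alpha> g)"
  by (simp add: wedge_pd_def sum_distrib_left sum.distrib algebra_simps)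

lemma sum_simp_faces_swap:
  assumes "finite K"
  shows "(\<Sum>s\<in>simp K j. \<Sum>u\<in>{u \<in> K. face s u}. f s u)
       = (\<Sum>u\<in>simp K (Suc j). \<Sum>t\<in>{t \<in> K. face t u}. f t u)"
proof -
  have fin: "finite (simp K i)" for i using assms by (simp add: simp_def)
  have "(\<Sum>s\<in>simp K j. \<Sum>u\<in>{u \<in> K. face s u}. f s u)
      = (\<Sum>s\<in>simp K j. \<Sum>u\<in>{u \<in> simp K (Suc j). face s u}. f s u)"
    by (rule sum.cong) (auto simp: simp_def face_def intro!: sum.cong)
  also have "\<dots> = (\<Sum>u\<in>simp K (Suc j). \<Sum>t\<in>{t \<in> simp K j. face t u}. f t u)"
    by (rule sum.swap_restrict[OF fin fin])
  also have "\<dots> = (\<Sum>u\<in>simp K (Suc j). \<Sum>t\<in>{t \<in> K. face t u}. f t u)"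
    by (rule sum.cong) (auto simp: simp_def face_def intro!: sum.cong)
  finally show ?thesis .
qed

lemma wedge_pd_dprim:
  assumes "finite K" and "n - m = Suc j"
  shows "wedge_pd K (Suc j) (dprim K (Suc j) \<alpha>) \<beta> = (-1) ^ Suc j * wedge_pd K j \<alpha> (dint K n m \<beta>)"
proof -
  have "wedge_pd K (Suc j) (dprim K (Suc j) \<alpha>) \<beta>
      = (\<Sum>u\<in>simp K (Suc j). \<Sum>t\<in>{t \<in> K. face t u}. \<alpha> t * incidence t u * \<beta> u)"
    unfolding wedge_pd_def dprim_def
    by (rule sum.cong) (simp_all add: sum_distrib_left sum_distrib_right mult.commute mult.left_commute)
  also have "\<dots> = (\<Sum>s\<in>simp K j. \<Sum>u\<in>{u \<in> K. face s u}. \<alpha> s * incidence s u * \<beta> u)"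
    by (rule sum_simp_faces_swap[OF \<open>finite K\<close>, symmetric])
  also have "\<dots> = (-1) ^ Suc j * wedge_pd K j \<alpha> (dint K n m \<beta>)"
    unfolding wedge_pd_def dint_def using assms(2)
    by (simp add: sum_distrib_left mult_ac)
  finally show ?thesis .
qed

lemma wedge_pd_dbd:
  assumes "finite K" and "n - m = Suc j"
  shows "wedge_pd K j \<alpha> (dbd K n m \<beta>) = (-1) ^ j * wedge_bpd K n j \<alpha> \<beta>"
proof -
  have "n - m - 1 = j" using assms(2) by simp
  have "wedge_pd K j \<alpha> (dbd K n m \<beta>) = (-1) ^ j * (\<Sum>s\<in>simp K j. if s \<in> bdry K n then \<alpha> s * \<beta> s else 0)"
    unfolding wedge_pd_def dbd_def \<open>n - m - 1 = j\<close>
    by (auto simp: sum_distrib_left intro!: sum.cong)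
  also have "\<dots> = (-1) ^ j * wedge_bpd K n j \<alpha> \<beta>"
    unfolding wedge_bpd_def using assms(1) by (simp add: sum.inter_restrict simp_def)
  finally show ?thesis .
qed

lemma minus_one_power_add_eq_0:
  "odd (x + y) \<Longrightarrow> (-1::real) ^ x + (-1) ^ y = 0"
  by (auto simp: minus_one_power_iff)

lemma dirac_flow_stokes:
  assumes "finite K" and "p = Suc a" and "q = Suc j" and "n = a + q"
  shows "wedge_pd K j \<alpha> (\<lambda>s. (-1) ^ (p * q + 1) * (dint K n (n - q) \<beta> s + dbd K n (n - q) \<gamma> s))
       + wedge_dp K n q \<beta> (dprim K q \<alpha>)
       + wedge_bdp K n j \<gamma> (\<lambda>s. (-1) ^ p * restr K n \<alpha> s) = 0"
proof -
  have nm: "n - (n - q) = Suc j" using assms by simp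
  define S1 where "S1 = wedge_pd K j \<alpha> (dint K n (n - q) \<beta>)"
  define S2 where "S2 = wedge_bpd K n j \<alpha> \<gamma>"
  have wedge_dint_dbd:
    "wedge_pd K j \<alpha> (\<lambda>s. (-1) ^ (p * q + 1) * (dint K n (n - q) \<beta> s + dbd K n (n - q) \<gamma> s))
       = (-1) ^ (p * q + 1) * (S1 + (-1) ^ j * S2)"
    unfolding wedge_pd_scale_add S1_def S2_def wedge_pd_dbd[OF \<open>finite K\<close> nm] ..
  have wedge_dprim: "wedge_dp K n q \<beta> (dprim K q \<alpha>) = (-1) ^ (q * a) * (-1) ^ q * S1"
    using wedge_pd_dprim[OF \<open>finite K\<close> nm] assms
    by (simp add: wedge_dp_def S1_def)
  have wedge_restr: "wedge_bdp K n j \<gamma> (\<lambda>s. (-1) ^ p * restr K n \<alpha> s) = (-1) ^ (j * a) * (-1) ^ p * S2"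
    using assms
    by (simp add: wedge_bdp_def wedge_bpd_def restr_def S2_def sum_distrib_left algebra_simps)
  have parity1: "(p * q + 1) + (q * a + q) = 2 * (q * a + q) + 1"
    and parity2: "(p * q + 1 + j) + (j * a + p) = 2 * (a * j + a + j + 1) + 1"
    using assms by (simp_all add: algebra_simps)
  have sign1: "(-1::real) ^ (p * q + 1) + (-1) ^ (q * a) * (-1) ^ q = 0"
    unfolding power_add[symmetric] by (rule minus_one_power_add_eq_0) (subst parity1, simp)
  have sign2: "(-1::real) ^ (p * q + 1) * (-1) ^ j + (-1) ^ (j * a) * (-1) ^ p = 0"
    unfolding power_add[symmetric] by (rule minus_one_power_add_eq_0) (subst parity2, simp)
  have "(-1) ^ (p * q + 1) * (S1 + (-1) ^ j * S2) + (-1) ^ (q * a) * (-1) ^ q * S1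
        + (-1) ^ (j * a) * (-1) ^ p * S2
      = ((-1) ^ (p * q + 1) + (-1) ^ (q * a) * (-1) ^ q) * S1
        + ((-1) ^ (p * q + 1) * (-1) ^ j + (-1) ^ (j * a) * (-1) ^ p) * S2"
    by (simp add: algebra_simps)
  also have "\<dots> = 0" unfolding sign1 sign2 by simp
  finally show ?thesis unfolding wedge_dint_dbd wedge_dprim wedge_restr .
qed

lemma effort_flow_pairing_dirac_flow_skew:
  assumes "finite K" and "0 < p" and "0 < q" and "p + q = n + 1"
  shows "effort_flow_pairing K n p q e1 (dirac_flow K n p q e2)
       + effort_flow_pairing K n p q e2 (dirac_flow K n p q e1) = 0"
proof -
  obtain a j where p: "p = Suc a" and q: "q = Suc j" using assms(2,3) not0_implies_Suc by blast
  with assms(4) have n: "n = a + q" and "n - p = j" by simp_all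
  obtain ep1 eq1 eb1 ep2 eq2 eb2 where "e1 = (ep1, eq1, eb1)" and "e2 = (ep2, eq2, eb2)"
    using prod_cases3 by metis
  with \<open>n - p = j\<close> show ?thesis
    using dirac_flow_stokes[OF \<open>finite K\<close> p q n, of ep1 eq2 eb2]
      dirac_flow_stokes[OF \<open>finite K\<close> p q n, of ep2 eq1 eb1]
    by (simp add: effort_flow_pairing_def dirac_flow_def)
qed

lemma flow_space_eq_effort_space:
  assumes "0 < p" and "p + q = n + 1"
  shows "flow_space K n p q = effort_space K n p q"
proof -
  from assms have "n - (n - q) = q" and "n - 1 - (n - q) = n - p" by simp_all
  then show ?thesis
    by (simp add: flow_space_def effort_space_def prim_forms_def dual_forms_def
        bprim_forms_def bdual_forms_def)
qed

lemma flow_space_diff: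
  "f \<in> flow_space K n p q \<Longrightarrow> g \<in> flow_space K n p q \<Longrightarrow> f - g \<in> flow_space K n p q"
  by (cases f, cases g)
     (simp add: flow_space_def prim_forms_def dual_forms_def bprim_forms_def)

lemma dirac_flow_mem_flow_space:
  assumes "0 < p" and "0 < q" and "p + q = n + 1" and "e \<in> effort_space K n p q"
  shows "dirac_flow K n p q e \<in> flow_space K n p q"
proof -
  from assms(1-3) have "n - (n - q) - 1 = n - p" by simp
  with assms(4) show ?thesis
    by (cases e) (auto simp: dirac_flow_def flow_space_def effort_space_def prim_forms_def
        dual_forms_def bprim_forms_def dint_def dbd_def dprim_def restr_def)
qed

lemma dirac_D_eq_graph:
  assumes "0 < p" and "0 < q" and "p + q = n + 1"
  shows "dirac_D K n p q = {(f, e). e \<in> effort_space K n p q \<and> f = dirac_flow K n p q e}"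
  using dirac_flow_mem_flow_space[OF assms]
  by (fastforce simp: dirac_D_def dirac_flow_def)

lemma form_eq_0_if_sum_squares_eq_0:
  fixes g :: "'a \<Rightarrow> real"
  assumes "finite A" and "\<forall>s. s \<notin> A \<longrightarrow> g s = 0" and "(\<Sum>s\<in>A. g s * g s) = 0"
  shows "g = 0"
proof
  fix s
  from assms(1,3) have "\<forall>s\<in>A. g s * g s = 0"
    by (subst sum_nonneg_eq_0_iff[symmetric]) auto
  with assms(2) show "g s = 0 s" by (cases "s \<in> A") auto
qed

lemma effort_flow_pairing_nondegenerate:
  assumes "finite K" and "0 < p" and "0 < q" and "p + q = n + 1"
    and "f \<in> flow_space K n p q" and "\<forall>e\<in>effort_space K n p q. effort_flow_pairing K n p q e f = 0"
  shows "f = 0"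
proof -
  obtain fp fq fb where f: "f = (fp, fq, fb)" using prod_cases3 by metis
  have fin: "finite (simp K i)" "finite (simp K i \<inter> bdry K n)" for i
    using assms(1) by (simp_all add: simp_def)
  from assms(2-4) have nq: "n - (n - q) = q" and "n - 1 - (n - q) = n - p" by simp_all
  have F: "(fp, fq, fb) \<in> effort_space K n p q"
    using assms(5) unfolding f flow_space_eq_effort_space[OF assms(2,4)] .
  then have "(fp, 0, 0) \<in> effort_space K n p q" "(0, fq, 0) \<in> effort_space K n p q"
    "(0, 0, fb) \<in> effort_space K n p q"
    by (simp_all add: effort_space_def prim_forms_def dual_forms_def bdual_forms_def)
  with assms(6) f have "wedge_pd K (n - p) fp fp = 0" "wedge_pd K q fq fq = 0"
    "wedge_bpd K n (n - p) fb fb = 0"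
    by (auto simp: effort_flow_pairing_def wedge_dp_def wedge_bdp_def wedge_pd_def wedge_bpd_def)
  moreover from F nq \<open>n - 1 - (n - q) = n - p\<close>
  have "\<forall>s. s \<notin> simp K (n - p) \<longrightarrow> fp s = 0" "\<forall>s. s \<notin> simp K q \<longrightarrow> fq s = 0"
    "\<forall>s. s \<notin> simp K (n - p) \<inter> bdry K n \<longrightarrow> fb s = 0"
    by (simp_all add: effort_space_def prim_forms_def dual_forms_def bdual_forms_def)
  ultimately have "fp = 0" "fq = 0" "fb = 0"
    using form_eq_0_if_sum_squares_eq_0[OF fin(1)] form_eq_0_if_sum_squares_eq_0[OF fin(2)]
    unfolding wedge_pd_def wedge_bpd_def by blast+
  with f show ?thesis by (simp add: zero_prod_def)
qed

lemma dirac_D_subset_orth_compl: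
  assumes "finite K" and "0 < p" and "0 < q" and "p + q = n + 1"
  shows "dirac_D K n p q \<subseteq> orth_compl K n p q (dirac_D K n p q)"
proof
  fix x assume "x \<in> dirac_D K n p q"
  then obtain e where e: "e \<in> effort_space K n p q" and x: "x = (dirac_flow K n p q e, e)"
    by (auto simp: dirac_D_eq_graph[OF assms(2-4)])
  have "\<forall>y\<in>dirac_D K n p q. bond_pairing K n p q x y = 0"
    using effort_flow_pairing_dirac_flow_skew[OF assms, of e]
    by (auto simp: dirac_D_eq_graph[OF assms(2-4)] x bond_pairing_eq_effort_flow_pairing)
  with e dirac_flow_mem_flow_space[OF assms(2-4) e] show "x \<in> orth_compl K n p q (dirac_D K n p q)"
    by (simp add: orth_compl_def x)
qed

lemma orth_compl_subset_dirac_D: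
  assumes "finite K" and "0 < p" and "0 < q" and "p + q = n + 1"
  shows "orth_compl K n p q (dirac_D K n p q) \<subseteq> dirac_D K n p q"
proof
  fix x assume orth: "x \<in> orth_compl K n p q (dirac_D K n p q)"
  then obtain f e where x: "x = (f, e)" and f: "f \<in> flow_space K n p q"
    and e: "e \<in> effort_space K n p q"
    and orth_D: "\<forall>y\<in>dirac_D K n p q. bond_pairing K n p q (f, e) y = 0"
    by (auto simp: orth_compl_def)
  have "effort_flow_pairing K n p q e' (f - dirac_flow K n p q e) = 0"
    if "e' \<in> effort_space K n p q" for e'
  proof -
    from that have "(dirac_flow K n p q e', e') \<in> dirac_D K n p q"
      by (simp add: dirac_D_eq_graph[OF assms(2-4)])
    with orth_D have "bond_pairing K n p q (f, e) (dirac_flow K n p q e', e') = 0" by blast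
    with effort_flow_pairing_dirac_flow_skew[OF assms, of e e'] show ?thesis
      by (simp add: bond_pairing_eq_effort_flow_pairing effort_flow_pairing_diff)
  qed
  then have "f - dirac_flow K n p q e = 0"
    using effort_flow_pairing_nondegenerate[OF assms
        flow_space_diff[OF f dirac_flow_mem_flow_space[OF assms(2-4) e]]]
    by blast
  with e show "x \<in> dirac_D K n p q" by (simp add: dirac_D_eq_graph[OF assms(2-4)] x)
qed

theorem theorem2:
  fixes K :: "'v list set" and n p q :: nat and pos :: "'v \<Rightarrow> 'a::euclidean_space"
  assumes "list_simplicial_complex K"
    and "manifold_like K n"
    and "oriented K n"
    and "geometric_realization K pos"
    and "well_centered K pos"
    and "0 < p" and "0 < q" and "p + q = n + 1"
  shows "dirac_D K n p q = orth_compl K n p q (dirac_D K n p q)"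
proof -
  have "finite K" using assms(1) by (simp add: list_simplicial_complex_def)
  with assms(6-8) show ?thesis
    using dirac_D_subset_orth_compl orth_compl_subset_dirac_D by (metis subset_antisym)
qed

end
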